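(* Let $X$ be a complete CAT(0) space, $T:X\to X$ nonexpansive, and $(\gamma_n)$ a sequence of positive reals. Then the family $(R_{T,\gamma_n})_{n\in\mathbb{N}}$ is jointly firmly nonexpansive with respect to $(\gamma_n)$.
   Context: A geodesic space $(X,d)$ is CAT(0) if for all $z\in X$, all geodesics $\gamma:[a,b]\to X$ and all $t\in[0,1]$, $d^2(z,\gamma((1-t)a+tb))\le(1-t)d^2(z,\gamma(a))+td^2(z,\gamma(b))-t(1-t)d^2(\gamma(a),\gamma(b))$; $(1-t)x+ty$ denotes the point at distance $t\,d(x,y)$ from $x$ on the unique geodesic from $x$ to $y$. For $\gamma>0$ and $x\in X$, $R_{T,\gamma}x$ is the unique fixed point of the contraction $y\mapsto\frac1{1+\gamma}x+\frac{\gamma}{1+\gamma}Ty$, i.e. $R_{T,\gamma}x=\frac1{1+\gamma}x+\frac\gamma{1+\gamma}TR_{T,\gamma}x$ (the resolvent of order $\gamma$ of $T$). $(T_n)$ is jointly firmly nonexpansive w.r.t. $(\gamma_n)$ if for all $n,m$, $x,y\in X$, $\alpha,\beta\in[0,1]$ with $(1-\alpha)\gamma_n=(1-\beta)\gamma_m$: $d(T_nx,T_my)\le d((1-\alpha)x+\alpha T_nx,(1-\beta)y+\beta T_my)$. *)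

theory Defs
  imports "HOL-Analysis.Analysis"
begin

definition geodesic :: "(real \<Rightarrow> 'a::metric_space) \<Rightarrow> real \<Rightarrow> real \<Rightarrow> bool" where
  "geodesic g a b \<longleftrightarrow> a \<le> b \<and>
     (\<forall>s\<in>{a..b}. \<forall>t\<in>{a..b}. dist (g s) (g t) = \<bar>s - t\<bar>)"

definition geodesic_space :: "'a::metric_space itself \<Rightarrow> bool" where
  "geodesic_space _ \<longleftrightarrow>
     (\<forall>x y::'a. \<exists>g. geodesic g 0 (dist x y) \<and> g 0 = x \<and> g (dist x y) = y)"

definition CAT0 :: "'a::metric_space itself \<Rightarrow> bool" where
  "CAT0 X \<longleftrightarrow> geodesic_space X \<and>
     (\<forall>(z::'a) g a b t. geodesic g a b \<longrightarrow> 0 \<le> t \<longrightarrow> t \<le> 1 \<longrightarrow>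
        (dist z (g ((1 - t) * a + t * b)))\<^sup>2 \<le>
          (1 - t) * (dist z (g a))\<^sup>2 + t * (dist z (g b))\<^sup>2
          - t * (1 - t) * (dist (g a) (g b))\<^sup>2)"

text \<open>cc x y t denotes (1-t)x + ty: the point at distance t d(x,y) from x on the
  (unique) geodesic from x to y.\<close>
definition cc :: "'a::metric_space \<Rightarrow> 'a \<Rightarrow> real \<Rightarrow> 'a" where
  "cc x y t = (THE z. \<exists>g. geodesic g 0 (dist x y) \<and> g 0 = x \<and> g (dist x y) = y
                          \<and> z = g (t * dist x y))"

definition nonexpansive :: "('a::metric_space \<Rightarrow> 'a) \<Rightarrow> bool" where
  "nonexpansive T \<longleftrightarrow> (\<forall>x y. dist (T x) (T y) \<le> dist x y)"

definition resolvent :: "('a::metric_space \<Rightarrow> 'a) \<Rightarrow> real \<Rightarrow> 'a \<Rightarrow> 'a" where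
  "resolvent T \<gamma> x = (THE y. y = cc x (T y) (\<gamma> / (1 + \<gamma>)))"

definition jointly_firmly_nonexpansive ::
  "(nat \<Rightarrow> 'a::metric_space \<Rightarrow> 'a) \<Rightarrow> (nat \<Rightarrow> real) \<Rightarrow> bool" where
  "jointly_firmly_nonexpansive Ts \<gamma> \<longleftrightarrow>
     (\<forall>n m x y \<alpha> \<beta>. 0 \<le> \<alpha> \<longrightarrow> \<alpha> \<le> 1 \<longrightarrow> 0 \<le> \<beta> \<longrightarrow> \<beta> \<le> 1 \<longrightarrow>
        (1 - \<alpha>) * \<gamma> n = (1 - \<beta>) * \<gamma> m \<longrightarrow>
        dist (Ts n x) (Ts m y) \<le> dist (cc x (Ts n x) \<alpha>) (cc y (Ts m y) \<beta>))"

end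

theory Submission
  imports Defs
begin

text \<open>Write \<open>\<lambda> = \<gamma>/(1+\<gamma>)\<close> and \<open>u = R\<^sub>\<gamma> x\<close>, so \<open>u = (1-\<lambda>)x + \<lambda>Tu\<close>. For \<open>p = (1-\<alpha>)x + \<alpha>u\<close>,
  a computation of distances along the geodesic from \<open>x\<close> to \<open>Tu\<close> shows that \<open>u\<close> lies on the
  geodesic from \<open>p\<close> to \<open>Tu\<close> at ratio \<open>c/(1+c)\<close> with \<open>c = (1-\<alpha>)\<gamma>\<close>; i.e. \<open>u = R\<^sub>c p\<close>.
  Under the hypothesis \<open>(1-\<alpha>)\<gamma>\<^sub>n = (1-\<beta>)\<gamma>\<^sub>m\<close> both resolvent values are therefore fixed points
  of maps \<open>y \<mapsto> (1-\<mu>)p + \<mu>Ty\<close> with the same \<open>\<mu>\<close>, and convexity of the metric of a CAT(0)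
  space together with nonexpansiveness of \<open>T\<close> bounds their distance by \<open>d(p,q)\<close>.\<close>

lemma CAT0_ineq:
  assumes "CAT0 TYPE('a::metric_space)" "geodesic g a b" "0 \<le> t" "t \<le> 1"
  shows "(dist (z::'a) (g ((1 - t) * a + t * b)))\<^sup>2 \<le>
          (1 - t) * (dist z (g a))\<^sup>2 + t * (dist z (g b))\<^sup>2
          - t * (1 - t) * (dist (g a) (g b))\<^sup>2"
  using assms unfolding CAT0_def by blast

lemma CAT0_ex_geodesic:
  assumes "CAT0 TYPE('a::metric_space)"
  shows "\<exists>g. geodesic g 0 (dist x y) \<and> g 0 = x \<and> g (dist x y) = (y::'a)"
  using assms unfolding CAT0_def geodesic_space_def by blast

lemma dist_geodesic_point:
  assumes g: "geodesic g 0 (dist x y)" "g 0 = x" "g (dist x y) = y"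
    and t: "0 \<le> t" "t \<le> 1"
  shows "dist x (g (t * dist x y)) = t * dist x y"
    and "dist (g (t * dist x y)) y = (1 - t) * dist x y"
proof -
  have s: "t * dist x y \<in> {0..dist x y}" using t by (simp add: mult_left_le_one_le)
  have "dist (g 0) (g (t * dist x y)) = \<bar>0 - t * dist x y\<bar>"
    "dist (g (t * dist x y)) (g (dist x y)) = \<bar>t * dist x y - dist x y\<bar>"
    using g(1) s unfolding geodesic_def by auto
  then show "dist x (g (t * dist x y)) = t * dist x y"
    and "dist (g (t * dist x y)) y = (1 - t) * dist x y"
    using g(2,3) s by (auto simp: algebra_simps)
qed

text \<open>Applied to the points of a second geodesic, this gives uniqueness of geodesics, which is
  what makes \<^const>\<open>cc\<close> well defined.\<close>

lemma CAT0_geodesic_point_unique: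
  assumes C: "CAT0 TYPE('a::metric_space)"
    and g: "geodesic g 0 (dist x y)" "g 0 = x" "g (dist x y) = (y::'a)"
    and t: "0 \<le> t" "t \<le> 1"
    and d: "dist x z = t * dist x y" "dist z y = (1 - t) * dist x y"
  shows "z = g (t * dist x y)"
proof -
  have "(dist z (g (t * dist x y)))\<^sup>2 \<le>
          (1 - t) * (t * dist x y)\<^sup>2 + t * ((1 - t) * dist x y)\<^sup>2 - t * (1 - t) * (dist x y)\<^sup>2"
    using CAT0_ineq[OF C g(1) t, of z] g d by (simp add: dist_commute)
  also have "\<dots> = 0" by (simp add: power2_eq_square algebra_simps)
  finally show ?thesis by simp
qed

lemma cc_geodesic:
  assumes C: "CAT0 TYPE('a::metric_space)"
    and g: "geodesic g 0 (dist x y)" "g 0 = x" "g (dist x y) = (y::'a)"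
    and t: "0 \<le> t" "t \<le> 1"
  shows "cc x y t = g (t * dist x y)"
  unfolding cc_def
proof (rule the_equality)
  show "\<exists>h. geodesic h 0 (dist x y) \<and> h 0 = x \<and> h (dist x y) = y \<and> g (t * dist x y) = h (t * dist x y)"
    using g by blast
next
  fix z
  assume "\<exists>h. geodesic h 0 (dist x y) \<and> h 0 = x \<and> h (dist x y) = y \<and> z = h (t * dist x y)"
  then obtain h where h: "geodesic h 0 (dist x y)" "h 0 = x" "h (dist x y) = y"
    and z: "z = h (t * dist x y)" by blast
  show "z = g (t * dist x y)"
    unfolding z using CAT0_geodesic_point_unique[OF C g t dist_geodesic_point[OF h t]] .
qed

lemma
  assumes C: "CAT0 TYPE('a::metric_space)" and t: "0 \<le> t" "t \<le> 1"
  shows dist_cc_left: "dist x (cc x y t) = t * dist x (y::'a)"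
    and dist_cc_right: "dist (cc x y t) y = (1 - t) * dist x y"
proof -
  obtain g where g: "geodesic g 0 (dist x y)" "g 0 = x" "g (dist x y) = y"
    using CAT0_ex_geodesic[OF C] by blast
  show "dist x (cc x y t) = t * dist x y" "dist (cc x y t) y = (1 - t) * dist x y"
    unfolding cc_geodesic[OF C g t] using dist_geodesic_point[OF g t] by simp_all
qed

lemma cc_unique:
  assumes C: "CAT0 TYPE('a::metric_space)" and t: "0 \<le> t" "t \<le> 1"
    and d: "dist x z = t * dist x y" "dist z y = (1 - t) * dist x (y::'a)"
  shows "z = cc x y t"
proof -
  obtain g where g: "geodesic g 0 (dist x y)" "g 0 = x" "g (dist x y) = y"
    using CAT0_ex_geodesic[OF C] by blast
  show ?thesis
    unfolding cc_geodesic[OF C g t] by (rule CAT0_geodesic_point_unique[OF C g t d])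
qed

lemma CAT0_cc_ineq:
  assumes C: "CAT0 TYPE('a::metric_space)" and t: "0 \<le> t" "t \<le> 1"
  shows "(dist (z::'a) (cc x y t))\<^sup>2 \<le>
          (1 - t) * (dist z x)\<^sup>2 + t * (dist z y)\<^sup>2 - t * (1 - t) * (dist x y)\<^sup>2"
proof -
  obtain g where g: "geodesic g 0 (dist x y)" "g 0 = x" "g (dist x y) = y"
    using CAT0_ex_geodesic[OF C] by blast
  have "cc x y t = g ((1 - t) * 0 + t * dist x y)" using cc_geodesic[OF C g t] by simp
  then show ?thesis using CAT0_ineq[OF C g(1) t, of z] g by simp
qed

lemma cc_commute:
  assumes C: "CAT0 TYPE('a::metric_space)" and t: "0 \<le> t" "t \<le> 1"
  shows "cc x y t = cc y (x::'a) (1 - t)"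
  using t dist_cc_left[OF C t, of x y] dist_cc_right[OF C t, of x y]
  by (intro cc_unique[OF C]) (auto simp: dist_commute)

lemma dist_cc_cc_same_start:
  assumes C: "CAT0 TYPE('a::metric_space)" and t: "0 \<le> t" "t \<le> 1"
  shows "dist (cc x y t) (cc x z t) \<le> t * dist y (z::'a)"
proof -
  define p where "p = cc x y t"
  define q where "q = cc x z t"
  have qp: "(dist q p)\<^sup>2 \<le> (1 - t) * (t * dist x z)\<^sup>2 + t * (dist q y)\<^sup>2 - t * (1 - t) * (dist x y)\<^sup>2"
    using CAT0_cc_ineq[OF C t, of q x y] dist_cc_left[OF C t, of x z]
    unfolding p_def q_def by (simp add: dist_commute)
  have "t * (dist q y)\<^sup>2 \<le> t * ((1 - t) * (dist x y)\<^sup>2 + t * (dist y z)\<^sup>2 - t * (1 - t) * (dist x z)\<^sup>2)"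
    using CAT0_cc_ineq[OF C t, of y x z] t unfolding q_def
    by (simp add: mult_left_mono dist_commute)
  with qp have "(dist q p)\<^sup>2 \<le> (1 - t) * (t * dist x z)\<^sup>2
      + t * ((1 - t) * (dist x y)\<^sup>2 + t * (dist y z)\<^sup>2 - t * (1 - t) * (dist x z)\<^sup>2)
      - t * (1 - t) * (dist x y)\<^sup>2"
    by linarith
  also have "\<dots> = (t * dist y z)\<^sup>2" by (simp add: power2_eq_square algebra_simps)
  finally have "(dist p q)\<^sup>2 \<le> (t * dist y z)\<^sup>2" by (simp add: dist_commute)
  then show ?thesis
    unfolding p_def q_def using t by (meson power2_le_imp_le mult_nonneg_nonneg zero_le_dist)
qed

lemma dist_cc_cc:
  assumes C: "CAT0 TYPE('a::metric_space)" and t: "0 \<le> t" "t \<le> 1"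
  shows "dist (cc a b t) (cc c d t) \<le> (1 - t) * dist a c + t * dist b (d::'a)"
proof -
  have "dist (cc a b t) (cc c d t) \<le> dist (cc a b t) (cc a d t) + dist (cc a d t) (cc c d t)"
    by (rule dist_triangle)
  also have "dist (cc a d t) (cc c d t) = dist (cc d a (1 - t)) (cc d c (1 - t))"
    using cc_commute[OF C t] by metis
  also have "\<dots> \<le> (1 - t) * dist a c" using dist_cc_cc_same_start[OF C, of "1 - t"] t by simp
  finally show ?thesis using dist_cc_cc_same_start[OF C t, of a b d] by linarith
qed

lemma resolvent_fixpoint:
  fixes T :: "'a::complete_space \<Rightarrow> 'a"
  assumes C: "CAT0 TYPE('a)" and T: "nonexpansive T" and "\<gamma> > 0"
  shows "resolvent T \<gamma> x = cc x (T (resolvent T \<gamma> x)) (\<gamma> / (1 + \<gamma>))"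
proof -
  define l where "l = \<gamma> / (1 + \<gamma>)"
  have l: "0 \<le> l" "l < 1" using \<open>\<gamma> > 0\<close> by (auto simp: l_def field_simps)
  have "\<exists>!y. cc x (T y) l = y"
  proof (rule banach_fix_type[OF l], intro allI)
    fix u v
    have "dist (cc x (T u) l) (cc x (T v) l) \<le> l * dist (T u) (T v)"
      using dist_cc_cc_same_start[OF C] l by simp
    also have "\<dots> \<le> l * dist u v" using T l unfolding nonexpansive_def by (simp add: mult_left_mono)
    finally show "dist (cc x (T u) l) (cc x (T v) l) \<le> l * dist u v" .
  qed
  then have "\<exists>!y. y = cc x (T y) l" by metis
  then show ?thesis unfolding resolvent_def l_def by (rule theI')
qed

lemma cc_shift_start:
  assumes C: "CAT0 TYPE('a::metric_space)" and \<alpha>: "0 \<le> \<alpha>" "\<alpha> \<le> 1" and "\<gamma> > 0"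
    and u: "u = cc x (w::'a) (\<gamma> / (1 + \<gamma>))"
  shows "u = cc (cc x u \<alpha>) w ((1 - \<alpha>) * \<gamma> / (1 + (1 - \<alpha>) * \<gamma>))"
proof -
  define l where "l = \<gamma> / (1 + \<gamma>)"
  define D where "D = dist x w"
  define p where "p = cc x u \<alpha>"
  define \<mu> where "\<mu> = (1 - \<alpha>) * \<gamma> / (1 + (1 - \<alpha>) * \<gamma>)"
  have l: "0 \<le> l" "l \<le> 1" using \<open>\<gamma> > 0\<close> by (auto simp: l_def field_simps)
  have c: "0 \<le> (1 - \<alpha>) * \<gamma>" using \<alpha> \<open>\<gamma> > 0\<close> by simp
  have \<mu>: "0 \<le> \<mu>" "\<mu> \<le> 1" using c by (auto simp: \<mu>_def field_simps)
  have xu: "dist x u = l * D" and uw: "dist u w = (1 - l) * D"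
    using dist_cc_left[OF C l, of x w] dist_cc_right[OF C l, of x w] u
    unfolding l_def D_def by auto
  have xp: "dist x p = \<alpha> * (l * D)" and pu: "dist p u = (1 - \<alpha>) * (l * D)"
    using dist_cc_left[OF C \<alpha>, of x u] dist_cc_right[OF C \<alpha>, of x u] xu unfolding p_def by auto
  \<comment> \<open>the two triangle inequalities squeeze \<open>d(p,w)\<close> since \<open>d(x,p) + d(p,u) + d(u,w) = d(x,w)\<close>\<close>
  have "dist p w \<le> dist p u + dist u w" "dist x w \<le> dist x p + dist p w"
    by (rule dist_triangle)+
  then have pw: "dist p w = (1 - \<alpha> * l) * D"
    using pu uw xp unfolding D_def by (simp add: algebra_simps)
  have ne: "1 + (1 - \<alpha>) * \<gamma> \<noteq> 0" "1 + \<gamma> \<noteq> 0" using c \<open>\<gamma> > 0\<close> by linarith+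
  have "1 - \<alpha> * l = (1 + (1 - \<alpha>) * \<gamma>) / (1 + \<gamma>)"
    unfolding l_def using ne by (simp add: field_simps)
  then have ratio: "(1 - \<alpha>) * l = \<mu> * (1 - \<alpha> * l)"
    unfolding \<mu>_def l_def using ne by simp
  then have "(1 - \<mu>) * (1 - \<alpha> * l) = 1 - l" by (simp add: algebra_simps)
  with ratio have "dist p u = \<mu> * dist p w" "dist u w = (1 - \<mu>) * dist p w"
    using pu uw pw by (metis mult.assoc)+
  then show ?thesis
    unfolding \<mu>_def[symmetric] p_def[symmetric] using cc_unique[OF C \<mu>] by simp
qed

lemma dist_fixpoints_cc_le:
  assumes C: "CAT0 TYPE('a::metric_space)" and T: "nonexpansive T" and \<mu>: "0 \<le> \<mu>" "\<mu> < 1"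
    and u: "u = cc p (T u) \<mu>" and v: "v = cc q (T v) \<mu>"
  shows "dist u v \<le> dist p (q::'a)"
proof -
  have "dist u v \<le> (1 - \<mu>) * dist p q + \<mu> * dist (T u) (T v)"
    using dist_cc_cc[OF C \<mu>(1)] \<mu> u v by (metis less_imp_le)
  also have "\<dots> \<le> (1 - \<mu>) * dist p q + \<mu> * dist u v"
    using T \<mu> unfolding nonexpansive_def by (simp add: mult_left_mono)
  finally have "(1 - \<mu>) * dist u v \<le> (1 - \<mu>) * dist p q" by (simp add: algebra_simps)
  then show ?thesis using \<mu> by simp
qed

theorem proposition3p19:
  fixes T :: "'a::complete_space \<Rightarrow> 'a" and \<gamma> :: "nat \<Rightarrow> real"
  assumes "CAT0 TYPE('a)"
    and "nonexpansive T"
    and "\<And>n. \<gamma> n > 0"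
  shows "jointly_firmly_nonexpansive (\<lambda>n. resolvent T (\<gamma> n)) \<gamma>"
  unfolding jointly_firmly_nonexpansive_def
proof (intro allI impI)
  fix n m x y and \<alpha> \<beta> :: real
  assume \<alpha>: "0 \<le> \<alpha>" "\<alpha> \<le> 1" and \<beta>: "0 \<le> \<beta>" "\<beta> \<le> 1"
    and eq: "(1 - \<alpha>) * \<gamma> n = (1 - \<beta>) * \<gamma> m"
  define u where "u = resolvent T (\<gamma> n) x"
  define v where "v = resolvent T (\<gamma> m) y"
  define c where "c = (1 - \<alpha>) * \<gamma> n"
  have u: "u = cc x (T u) (\<gamma> n / (1 + \<gamma> n))"
    unfolding u_def by (rule resolvent_fixpoint[OF assms])
  have v: "v = cc y (T v) (\<gamma> m / (1 + \<gamma> m))"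
    unfolding v_def by (rule resolvent_fixpoint[OF assms])
  have "0 \<le> c" using \<alpha> assms(3)[of n] by (simp add: c_def)
  then have "0 \<le> c / (1 + c)" "c / (1 + c) < 1" by simp_all
  moreover have "u = cc (cc x u \<alpha>) (T u) (c / (1 + c))"
    unfolding c_def by (rule cc_shift_start[OF assms(1) \<alpha> assms(3) u])
  moreover have "v = cc (cc y v \<beta>) (T v) (c / (1 + c))"
    unfolding c_def eq by (rule cc_shift_start[OF assms(1) \<beta> assms(3) v])
  ultimately have "dist u v \<le> dist (cc x u \<alpha>) (cc y v \<beta>)"
    by (rule dist_fixpoints_cc_le[OF assms(1,2)])
  then show "dist (resolvent T (\<gamma> n) x) (resolvent T (\<gamma> m) y)
        \<le> dist (cc x (resolvent T (\<gamma> n) x) \<alpha>) (cc y (resolvent T (\<gamma> m) y) \<beta>)"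
    unfolding u_def v_def .
qed

end
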